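(* In the size-cost migration model, every randomized online algorithm for non-clairvoyant dynamic bin packing whose expected total migrated size is $o(\text{total size})$ has competitive ratio at least $\frac{\mu}{6}$, where $\mu$ is the ratio of the longest to the shortest item duration.
   Context: Dynamic bin packing: bins have capacity $1$; items arrive online at times $a_i\ge0$ with size $s_i\in[0,1]$ and duration $d_i>0$ (only the size is revealed at arrival), present during $[a_i,a_i+d_i)$. Each item is placed on arrival into an open bin with enough remaining capacity or a new bin; a migration moves an already placed item to another bin. In the size-cost model, migrating item $i$ once costs $s_i$, and the migrated size is the sum of these costs; the total size of an instance is $\sum_i s_i$. Cost = total active time $\int_0^\infty(\text{number of nonempty bins at } t)\,dt$; $\mathrm{OPT}(I)=\int_0^\infty\mathrm{OPT}_t\,dt$ with $\mathrm{OPT}_t$ the minimum number of unit bins to pack the items present at time $t$. Competitive ratio at least $\gamma$: for every $\beta<\gamma$ some instance has expected cost $>\beta\,\mathrm{OPT}$. *)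

theory Defs
  imports "HOL-Probability.Probability" "HOL-Library.Landau_Symbols"
begin

text \<open>An item is a triple (arrival time, size, duration). An instance is the list of items
  in their (online) arrival order.\<close>
type_synonym item = "real \<times> real \<times> real"

definition arr :: "item \<Rightarrow> real" where "arr it = fst it"
definition sz :: "item \<Rightarrow> real" where "sz it = fst (snd it)"
definition dur :: "item \<Rightarrow> real" where "dur it = snd (snd it)"

definition valid_instance :: "item list \<Rightarrow> bool" where
  "valid_instance I \<longleftrightarrow> sorted (map arr I) \<and>
     (\<forall>it\<in>set I. 0 \<le> arr it \<and> 0 \<le> sz it \<and> sz it \<le> 1 \<and> 0 < dur it)"

definition present :: "item list \<Rightarrow> real \<Rightarrow> nat set" where
  "present I t = {i. i < length I \<and> arr (I!i) \<le> t \<and> t < arr (I!i) + dur (I!i)}"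

text \<open>What a non-clairvoyant online algorithm has observed at time t: the items that have
  arrived so far (in order), with arrival time and size, and the departure time of those
  that have already departed.\<close>
definition view :: "item list \<Rightarrow> real \<Rightarrow> (real \<times> real \<times> real option) list" where
  "view I t = map (\<lambda>it. (arr it, sz it,
        if arr it + dur it \<le> t then Some (arr it + dur it) else None))
      (filter (\<lambda>it. arr it \<le> t) I)"

text \<open>A schedule assigns at every time t to every item index a bin label.\<close>
type_synonym schedule = "real \<Rightarrow> nat \<Rightarrow> nat"

text \<open>A deterministic algorithm maps an instance to a schedule; it is online and
  non-clairvoyant if its decisions at time t depend only on the view at time t.\<close>
definition online_nc :: "(item list \<Rightarrow> schedule) \<Rightarrow> bool" where
  "online_nc A \<longleftrightarrow> (\<forall>I J t. valid_instance I \<and> valid_instance J \<and> view I t = view J t \<longrightarrow>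
       (\<forall>i < length (view I t). A I t i = A J t i))"

definition feasible :: "item list \<Rightarrow> schedule \<Rightarrow> bool" where
  "feasible I x \<longleftrightarrow> (\<forall>t b. (\<Sum>i\<in>{i\<in>present I t. x t i = b}. sz (I!i)) \<le> 1)"

definition nbins :: "item list \<Rightarrow> schedule \<Rightarrow> real \<Rightarrow> nat" where
  "nbins I x t = card (x t ` present I t)"

definition cost :: "item list \<Rightarrow> schedule \<Rightarrow> ennreal" where
  "cost I x = (\<integral>\<^sup>+ t. ennreal (real (nbins I x t)) \<partial>lborel)"

text \<open>Number of migrations of item i: number of bin changes during its presence.\<close>
definition migrations :: "item list \<Rightarrow> schedule \<Rightarrow> nat \<Rightarrow> ennreal" where
  "migrations I x i = (SUP ts\<in>{ts. sorted ts \<and> set ts \<subseteq> {arr (I!i)..<arr (I!i) + dur (I!i)}}.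
       ennreal (real (card {j. Suc j < length ts \<and> x (ts!j) i \<noteq> x (ts!Suc j) i})))"

text \<open>Size-cost model: each migration of item i costs s_i.\<close>
definition migrated_size :: "item list \<Rightarrow> schedule \<Rightarrow> ennreal" where
  "migrated_size I x = (\<Sum>i<length I. ennreal (sz (I!i)) * migrations I x i)"

definition total_size :: "item list \<Rightarrow> real" where
  "total_size I = sum_list (map sz I)"

definition opt_at :: "item list \<Rightarrow> real \<Rightarrow> nat" where
  "opt_at I t = (LEAST k. \<exists>f::nat \<Rightarrow> nat. (\<forall>i\<in>present I t. f i < k) \<and>
       (\<forall>b. (\<Sum>i\<in>{i\<in>present I t. f i = b}. sz (I!i)) \<le> 1))"

definition OPT :: "item list \<Rightarrow> ennreal" where
  "OPT I = (\<integral>\<^sup>+ t. ennreal (real (opt_at I t)) \<partial>lborel)"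

definition duration_ratio :: "item list \<Rightarrow> real" where
  "duration_ratio I = Max (dur ` set I) / Min (dur ` set I)"

text \<open>A randomized algorithm: random seed from a probability space M; for each seed a
  deterministic online non-clairvoyant feasible algorithm (oblivious adversary).\<close>
definition randomized_algorithm :: "'r measure \<Rightarrow> ('r \<Rightarrow> item list \<Rightarrow> schedule) \<Rightarrow> bool" where
  "randomized_algorithm M A \<longleftrightarrow> prob_space M \<and>
     (\<forall>\<omega>\<in>space M. online_nc (A \<omega>) \<and>
        (\<forall>I. valid_instance I \<longrightarrow> feasible I (A \<omega> I) \<and>
             (\<lambda>t. real (nbins I (A \<omega> I) t)) \<in> borel_measurable borel)) \<and>
     (\<forall>I. valid_instance I \<longrightarrow>
        (\<lambda>\<omega>. cost I (A \<omega> I)) \<in> borel_measurable M \<and>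
        (\<lambda>\<omega>. migrated_size I (A \<omega> I)) \<in> borel_measurable M)"

definition exp_cost :: "'r measure \<Rightarrow> ('r \<Rightarrow> item list \<Rightarrow> schedule) \<Rightarrow> item list \<Rightarrow> ennreal" where
  "exp_cost M A I = (\<integral>\<^sup>+ \<omega>. cost I (A \<omega> I) \<partial>M)"

definition exp_migrated :: "'r measure \<Rightarrow> ('r \<Rightarrow> item list \<Rightarrow> schedule) \<Rightarrow> item list \<Rightarrow> ennreal" where
  "exp_migrated M A I = (\<integral>\<^sup>+ \<omega>. migrated_size I (A \<omega> I) \<partial>M)"

end

theory Submission
  imports Defs
begin

(* The adversary releases m k items of size 1/k at time 0, in m groups of k items; in every
   group exactly one item stays until time mu, all others leave at time 1. OPT uses m bins
   before time 1 and m/k bins afterwards. A non-clairvoyant algorithm has to pack the items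
   at time 0 without knowing which ones survive, and a bin holds at most k of them; for a
   uniformly random choice of survivors, a bin holding s items is hit with probability at
   least s/(2k), so the survivors meet at least m/2 initial bins in expectation. These bins
   stay open during [1, mu) unless their survivors migrate, and migrating one costs 1/k, so
   sublinear migration saves only o(m) of them. The expected cost is thus about
   m (1 + (mu - 1)/2) against OPT about m, a ratio near (mu + 1)/2 >= mu/6. *)

lemma prod_one_minus_le:
  fixes a :: "'a \<Rightarrow> real"
  assumes "finite X" "\<And>x. x \<in> X \<Longrightarrow> 0 \<le> a x" "\<And>x. x \<in> X \<Longrightarrow> a x \<le> 1" "sum a X \<le> 1"
  shows "(\<Prod>x\<in>X. 1 - a x) \<le> 1 - sum a X / 2"
proof -
  let ?s = "sum a X"
  have "0 \<le> ?s"
    using assms(2) by (rule sum_nonneg)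
  have "(\<Prod>x\<in>X. 1 - a x) \<le> (\<Prod>x\<in>X. exp (- a x))"
    using assms(2,3) by (intro prod_mono) (auto simp: exp_ge_add_one_self[of "- a _", simplified])
  also have "\<dots> = exp (- ?s)"
    using assms(1) by (simp add: exp_sum[symmetric] sum_negf)
  also have "\<dots> = 1 / exp ?s"
    by (simp add: exp_minus inverse_eq_divide)
  also have "\<dots> \<le> 1 / (1 + ?s)"
    using \<open>0 \<le> ?s\<close> by (intro divide_left_mono exp_ge_add_one_self) auto
  also have "\<dots> \<le> 1 - ?s / 2"
  proof -
    have "1 \<le> (1 + ?s) * (1 - ?s / 2)"
      using \<open>0 \<le> ?s\<close> assms(4) mult_nonneg_nonneg[of ?s "1 - ?s"] by (simp add: algebra_simps)
    then show ?thesis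
      using \<open>0 \<le> ?s\<close> by (simp add: divide_simps mult.commute)
  qed
  finally show ?thesis .
qed

lemma card_le_card_image_mult:
  assumes "finite A" "\<And>b. card {a\<in>A. g a = b} \<le> k"
  shows "card A \<le> card (g ` A) * k"
proof -
  have "card A = (\<Sum>b\<in>g ` A. card {a\<in>A. g a = b})"
    using sum.group[of A "g ` A" g "\<lambda>_. 1::nat"] assms(1) by simp
  also have "\<dots> \<le> (\<Sum>b\<in>g ` A. k)"
    by (intro sum_mono assms(2))
  finally show ?thesis
    by simp
qed

lemma card_image_le_card_image_add_card_differ:
  assumes "finite S"
  shows "card (L ` S) \<le> card (g ` S) + card {i\<in>S. g i \<noteq> L i}"
proof -
  have "L ` S \<subseteq> g ` S \<union> L ` {i\<in>S. g i \<noteq> L i}"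
  proof
    fix b
    assume "b \<in> L ` S"
    then obtain i where "i \<in> S" "b = L i"
      by blast
    then show "b \<in> g ` S \<union> L ` {i\<in>S. g i \<noteq> L i}"
      by (cases "g i = L i") (metis UnI1 image_eqI, blast)
  qed
  then have "card (L ` S) \<le> card (g ` S \<union> L ` {i\<in>S. g i \<noteq> L i})"
    using assms by (intro card_mono) auto
  also have "\<dots> \<le> card (g ` S) + card (L ` {i\<in>S. g i \<noteq> L i})"
    by (rule card_Un_le)
  also have "\<dots> \<le> card (g ` S) + card {i\<in>S. g i \<noteq> L i}"
    using assms card_image_le[of "{i\<in>S. g i \<noteq> L i}" L] by simp
  finally show ?thesis .
qed

lemma card_div_fiber_le:
  assumes "k > 0"
  shows "card {i\<in>A. i div k = b} \<le> k"
proof -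
  have "{i\<in>A. i div k = b} \<subseteq> (\<lambda>y. b*k + y) ` {..<k}"
  proof
    fix i assume "i \<in> {i\<in>A. i div k = b}"
    then have "i = b*k + i mod k"
      using div_mult_mod_eq[of i k] by simp
    then show "i \<in> (\<lambda>y. b*k + y) ` {..<k}"
      using assms by (intro image_eqI[of _ _ "i mod k"]) auto
  qed
  then have "card {i\<in>A. i div k = b} \<le> card ((\<lambda>y. b*k + y) ` {..<k})"
    by (intro card_mono) auto
  also have "\<dots> \<le> k"
    using card_image_le[of "{..<k}" "\<lambda>y. b*k + y"] by simp
  finally show ?thesis .
qed

lemma card_less_mult_eq_sum:
  fixes m k :: nat
  shows "card {i. i < m*k \<and> P i} = (\<Sum>x<m. card {y. y < k \<and> P (x*k + y)})"
proof -
  have card_eq: "card {i. i < n \<and> Q i} = (\<Sum>i<n. of_bool (Q i))" for n and Q :: "nat \<Rightarrow> bool"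
    by (simp add: Int_def)
  have "card {i. i < m*k \<and> P i} = (\<Sum>x<m. \<Sum>y<k. of_bool (P (y + x*k)))"
    unfolding card_eq[of "m*k" P] by (rule sum_mult_product)
  also have "\<dots> = (\<Sum>x<m. card {y. y < k \<and> P (x*k + y)})"
  proof (rule sum.cong[OF refl])
    fix x
    show "(\<Sum>y<k. of_bool (P (y + x*k))) = card {y. y < k \<and> P (x*k + y)}"
      using card_eq[of k "\<lambda>y. P (x*k + y)"] by (simp add: add.commute)
  qed
  finally show ?thesis .
qed

lemma ex_ge_of_card_mult_le_sum:
  fixes X :: "'a \<Rightarrow> ennreal"
  assumes "finite F" "F \<noteq> {}" "of_nat (card F) * c \<le> (\<Sum>f\<in>F. X f)"
  shows "\<exists>f\<in>F. c \<le> X f"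
proof -
  have "Max (X ` F) \<in> X ` F"
    using assms(1,2) by simp
  then obtain f where "f \<in> F" "X f = Max (X ` F)"
    by auto
  then have f_max: "X g \<le> X f" if "g \<in> F" for g
    using that assms(1) by simp
  have "of_nat (card F) * c \<le> of_nat (card F) * X f"
    using assms(3) sum_bounded_above[of F X "X f"] f_max by (meson order_trans)
  moreover have "(of_nat (card F) :: ennreal) \<noteq> 0"
    using assms(1,2) by simp
  ultimately have "c \<le> X f"
    by (simp add: ennreal_mult_le_mult_iff)
  with \<open>f \<in> F\<close> show ?thesis ..
qed

lemma smallo_id_eventually_le:
  fixes g :: "real \<Rightarrow> real"
  assumes "g \<in> o(\<lambda>x. x)" "c > 0"
  shows "\<forall>\<^sub>F n in sequentially. g (real n) \<le> c * real n"
proof -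
  have "\<forall>\<^sub>F x in at_top. norm (g x) \<le> c * norm x"
    using landau_o.smallD[OF assms] .
  then have "\<forall>\<^sub>F n in sequentially. norm (g (real n)) \<le> c * norm (real n)"
    using filterlim_real_sequentially unfolding filterlim_iff by blast
  then show ?thesis
    by eventually_elim auto
qed

lemma nn_integral_two_phases:
  fixes a b :: ennreal
  assumes "\<mu> \<ge> 1"
  shows "(\<integral>\<^sup>+ t. a * indicator {0..<1} t + b * indicator {1..<\<mu>} t \<partial>lborel) = a + b * ennreal (\<mu> - 1)"
  using assms by (simp add: nn_integral_add nn_integral_cmult_indicator)

lemma opt_at_le:
  assumes "\<And>i. i \<in> present I t \<Longrightarrow> h i < K"
    and "\<And>b. (\<Sum>i\<in>{i\<in>present I t. h i = b}. sz (I!i)) \<le> 1"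
  shows "opt_at I t \<le> K"
  unfolding opt_at_def by (rule Least_le) (use assms in blast)

(* Item x k + y, for y < k, is the y-th item of group x; it stays until mu iff y = f x. *)
definition adversary_instance :: "nat \<Rightarrow> nat \<Rightarrow> real \<Rightarrow> (nat \<Rightarrow> nat) \<Rightarrow> item list" where
  "adversary_instance k m \<mu> f =
     map (\<lambda>i. (0, 1 / real k, if i mod k = f (i div k) then \<mu> else 1)) [0..<m*k]"

definition survivors :: "nat \<Rightarrow> nat \<Rightarrow> (nat \<Rightarrow> nat) \<Rightarrow> nat set" where
  "survivors k m f = {i. i < m*k \<and> i mod k = f (i div k)}"

(* Summing over all choices stands for the adversary's uniformly random choice (Yao's principle). *)
definition survivor_choices :: "nat \<Rightarrow> nat \<Rightarrow> (nat \<Rightarrow> nat) set" where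
  "survivor_choices m k = (\<Pi>\<^sub>E x\<in>{..<m}. {..<k})"

lemma finite_survivor_choices: "finite (survivor_choices m k)"
  by (simp add: survivor_choices_def finite_PiE)

lemma card_survivor_choices: "card (survivor_choices m k) = k ^ m"
  by (simp add: survivor_choices_def card_PiE)

lemma length_adversary_instance [simp]: "length (adversary_instance k m \<mu> f) = m*k"
  by (simp add: adversary_instance_def)

lemma adversary_instance_nth:
  assumes "i < m*k"
  shows "arr (adversary_instance k m \<mu> f ! i) = 0"
    and "sz (adversary_instance k m \<mu> f ! i) = 1 / real k"
    and "dur (adversary_instance k m \<mu> f ! i) = (if i mod k = f (i div k) then \<mu> else 1)"
  using assms by (simp_all add: adversary_instance_def arr_def sz_def dur_def)

lemma valid_adversary_instance:
  assumes "k \<ge> 1" "\<mu> \<ge> 1"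
  shows "valid_instance (adversary_instance k m \<mu> f)"
proof -
  have "map arr (adversary_instance k m \<mu> f) = replicate (m*k) 0"
    by (simp add: adversary_instance_def arr_def comp_def map_replicate_const)
  then show ?thesis
    using assms by (auto simp: valid_instance_def adversary_instance_def arr_def sz_def dur_def)
qed

lemma total_size_adversary_instance:
  assumes "k \<ge> 1"
  shows "total_size (adversary_instance k m \<mu> f) = m"
  using assms by (simp add: total_size_def adversary_instance_def sz_def comp_def sum_list_triv)

lemma duration_ratio_adversary_instance:
  assumes "k \<ge> 2" "m \<ge> 1" "\<mu> \<ge> 1" "f 0 < k"
  shows "duration_ratio (adversary_instance k m \<mu> f) = \<mu>"
proof -
  define d where "d i = (if i mod k = f (i div k) then \<mu> else 1)" for i
  define y where "y = (if f 0 = 0 then 1 else (0::nat))"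
  have "d (f 0) = \<mu>" "d y = 1" "f 0 < m*k" "y < m*k"
    using assms by (auto simp: d_def y_def intro: less_le_trans[of _ k])
  then have "d ` {..<m*k} = {\<mu>, 1}"
    by (auto simp: d_def image_iff)
  moreover have "dur ` set (adversary_instance k m \<mu> f) = d ` {..<m*k}"
    by (simp add: adversary_instance_def dur_def d_def image_image atLeast0LessThan)
  ultimately show ?thesis
    using assms(3) by (simp add: duration_ratio_def max_def min_def)
qed

lemma present_adversary_instance:
  assumes "\<mu> \<ge> 1"
  shows "present (adversary_instance k m \<mu> f) t =
    (if 0 \<le> t \<and> t < 1 then {..<m*k} else if 1 \<le> t \<and> t < \<mu> then survivors k m f else {})"
  using assms by (auto simp: present_def survivors_def adversary_instance_nth split: if_splits)

lemma view_adversary_instance_0: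
  assumes "\<mu> \<ge> 1"
  shows "view (adversary_instance k m \<mu> f) 0 = map (\<lambda>i. (0, 1 / real k, None)) [0..<m*k]"
  using assms by (simp add: view_def adversary_instance_def arr_def sz_def dur_def)

lemma survivors_eq_image:
  assumes "f \<in> survivor_choices m k"
  shows "survivors k m f = (\<lambda>x. x*k + f x) ` {..<m}"
proof (intro equalityI subsetI)
  fix i
  assume "i \<in> survivors k m f"
  then have "i = i div k * k + f (i div k)" "i div k < m"
    using div_mult_mod_eq[of i k] by (auto simp: survivors_def less_mult_imp_div_less)
  then show "i \<in> (\<lambda>x. x*k + f x) ` {..<m}"
    by (intro image_eqI[of _ _ "i div k"]) auto
next
  fix i
  assume "i \<in> (\<lambda>x. x*k + f x) ` {..<m}"
  then obtain x where "x < m" "i = x*k + f x"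
    by blast
  moreover have "f x < k"
    using assms \<open>x < m\<close> by (auto simp: survivor_choices_def)
  moreover have "x*k + f x < m*k"
    using \<open>f x < k\<close> \<open>x < m\<close> mult_le_mono1[of "Suc x" m k] by simp
  ultimately show "i \<in> survivors k m f"
    by (simp add: survivors_def)
qed

lemma sum_sz_adversary_instance:
  assumes "F \<subseteq> {..<m*k}"
  shows "(\<Sum>i\<in>F. sz (adversary_instance k m \<mu> f ! i)) = real (card F) / real k"
  using assms by (simp add: adversary_instance_nth subset_eq)

lemma opt_at_adversary_instance_le:
  assumes "\<mu> \<ge> 1" "k \<ge> 1"
    and "\<And>i. i \<in> present (adversary_instance k m \<mu> f) t \<Longrightarrow> h i < K"
    and "\<And>b. card {i\<in>present (adversary_instance k m \<mu> f) t. h i = b} \<le> k"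
  shows "opt_at (adversary_instance k m \<mu> f) t \<le> K"
proof (rule opt_at_le)
  fix b
  have "present (adversary_instance k m \<mu> f) t \<subseteq> {..<m*k}"
    by (auto simp: present_def)
  then show "(\<Sum>i\<in>{i\<in>present (adversary_instance k m \<mu> f) t. h i = b}.
      sz (adversary_instance k m \<mu> f ! i)) \<le> 1"
    using assms(2) assms(4)[of b] by (subst sum_sz_adversary_instance) auto
qed (use assms(3) in blast)

lemma opt_at_adversary_instance_phase1:
  assumes "\<mu> \<ge> 1" "k \<ge> 1" "0 \<le> t" "t < 1"
  shows "opt_at (adversary_instance k m \<mu> f) t \<le> m"
proof (rule opt_at_adversary_instance_le[where h = "\<lambda>i. i div k"])
  fix b
  show "card {i \<in> present (adversary_instance k m \<mu> f) t. i div k = b} \<le> k"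
    using assms(2) by (intro card_div_fiber_le) simp
qed (use assms in \<open>auto simp: present_adversary_instance less_mult_imp_div_less\<close>)

lemma opt_at_adversary_instance_phase2:
  assumes "\<mu> \<ge> 1" "k \<ge> 1" "1 \<le> t" "t < \<mu>" "m = k * r"
  shows "opt_at (adversary_instance k m \<mu> f) t \<le> r"
proof (rule opt_at_adversary_instance_le[where h = "\<lambda>i. i div k div k"])
  have present: "present (adversary_instance k m \<mu> f) t = survivors k m f"
    using assms by (simp add: present_adversary_instance)
  fix b
  let ?S = "{i \<in> survivors k m f. i div k div k = b}"
  have "inj_on (\<lambda>i. i div k) ?S"
    by (rule inj_onI) (metis (mono_tags, lifting) div_mult_mod_eq mem_Collect_eq survivors_def)
  then have "card ?S = card ((\<lambda>i. i div k) ` ?S)"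
    by (simp add: card_image)
  also have "(\<lambda>i. i div k) ` ?S = {x \<in> (\<lambda>i. i div k) ` survivors k m f. x div k = b}"
    by blast
  also have "card \<dots> \<le> k"
    using assms(2) by (intro card_div_fiber_le) simp
  finally show "card {i \<in> present (adversary_instance k m \<mu> f) t. i div k div k = b} \<le> k"
    by (simp add: present)
next
  fix i
  assume "i \<in> present (adversary_instance k m \<mu> f) t"
  then have "i div k < m"
    using assms by (simp add: present_adversary_instance survivors_def less_mult_imp_div_less)
  then show "i div k div k < r"
    using assms(5) by (metis less_mult_imp_div_less mult.commute)
qed (use assms in auto)

lemma opt_at_adversary_instance_outside:
  assumes "\<mu> \<ge> 1" "\<not> (0 \<le> t \<and> t < \<mu>)"
  shows "opt_at (adversary_instance k m \<mu> f) t = 0"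
proof -
  have "present (adversary_instance k m \<mu> f) t = {}"
    using assms by (auto simp: present_adversary_instance)
  then have "opt_at (adversary_instance k m \<mu> f) t \<le> 0"
    by (intro opt_at_le) auto
  then show ?thesis
    by simp
qed

lemma OPT_adversary_instance_le:
  assumes "\<mu> \<ge> 1" "k \<ge> 1" "m = k * r"
  shows "OPT (adversary_instance k m \<mu> f) \<le> ennreal (real m + (\<mu> - 1) * real r)"
proof -
  have "ennreal (opt_at (adversary_instance k m \<mu> f) t)
      \<le> ennreal m * indicator {0..<1} t + ennreal r * indicator {1..<\<mu>} t" for t
  proof (cases "t \<in> {0..<1}")
    case True
    then show ?thesis
      using opt_at_adversary_instance_phase1[OF assms(1,2), of t m f] by simp
  next
    case False
    then show ?thesis
      using opt_at_adversary_instance_phase2[OF assms(1,2) _ _ assms(3), of t f]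
        opt_at_adversary_instance_outside[OF assms(1), of t k m f]
      by (cases "t \<in> {1..<\<mu>}") auto
  qed
  then have "OPT (adversary_instance k m \<mu> f)
      \<le> (\<integral>\<^sup>+ t. ennreal m * indicator {0..<1} t + ennreal r * indicator {1..<\<mu>} t \<partial>lborel)"
    unfolding OPT_def by (rule nn_integral_mono)
  also have "\<dots> = ennreal m + ennreal r * ennreal (\<mu> - 1)"
    by (rule nn_integral_two_phases[OF assms(1)])
  also have "\<dots> = ennreal (real m + (\<mu> - 1) * real r)"
    using assms(1) by (simp add: ennreal_mult[symmetric] mult.commute)
  finally show ?thesis .
qed

lemma card_bin_adversary_instance_le:
  assumes "feasible (adversary_instance k m \<mu> f) x" "k \<ge> 1" "\<mu> \<ge> 1" "0 \<le> t" "t < 1"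
  shows "card {i. i < m*k \<and> x t i = b} \<le> k"
proof -
  let ?I = "adversary_instance k m \<mu> f" and ?B = "{i. i < m*k \<and> x t i = b}"
  have "{i\<in>present ?I t. x t i = b} = ?B"
    using assms by (auto simp: present_adversary_instance)
  then have "(\<Sum>i\<in>?B. sz (?I!i)) \<le> 1"
    using assms(1) unfolding feasible_def by metis
  moreover have "(\<Sum>i\<in>?B. sz (?I!i)) = real (card ?B) / real k"
    by (rule sum_sz_adversary_instance) auto
  ultimately show ?thesis
    using assms(2) by (simp add: divide_simps)
qed

lemma nbins_adversary_instance_phase1:
  assumes "feasible (adversary_instance k m \<mu> f) x" "k \<ge> 1" "\<mu> \<ge> 1" "0 \<le> t" "t < 1"
  shows "m \<le> nbins (adversary_instance k m \<mu> f) x t"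
proof -
  have "m * k \<le> card (x t ` {..<m*k}) * k"
    using card_le_card_image_mult[of "{..<m*k}" "x t" k]
      card_bin_adversary_instance_le[OF assms] by simp
  then show ?thesis
    using assms by (simp add: nbins_def present_adversary_instance)
qed

lemma one_le_migrations_adversary_instance:
  assumes "i \<in> survivors k m f" "0 \<le> t" "t < \<mu>" "x t i \<noteq> x 0 i"
  shows "1 \<le> migrations (adversary_instance k m \<mu> f) x i"
proof -
  let ?I = "adversary_instance k m \<mu> f"
  have "[0, t] \<in> {ts. sorted ts \<and> set ts \<subseteq> {arr (?I!i)..<arr (?I!i) + dur (?I!i)}}"
    using assms by (simp add: survivors_def adversary_instance_nth)
  then have "ennreal (card {j. Suc j < length [0, t] \<and> x ([0, t]!j) i \<noteq> x ([0, t]!Suc j) i})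
      \<le> migrations ?I x i"
    unfolding migrations_def by (rule SUP_upper)
  moreover have "{j. Suc j < length [0, t] \<and> x ([0, t]!j) i \<noteq> x ([0, t]!Suc j) i} = {0}"
    using assms(4) by auto
  ultimately show ?thesis
    by simp
qed

lemma card_le_migrated_size_adversary_instance:
  assumes "D \<subseteq> survivors k m f" "0 \<le> t" "t < \<mu>" "\<And>i. i \<in> D \<Longrightarrow> x t i \<noteq> x 0 i" "k \<ge> 1"
  shows "ennreal (card D) \<le> ennreal k * migrated_size (adversary_instance k m \<mu> f) x"
proof -
  let ?I = "adversary_instance k m \<mu> f"
  have D: "D \<subseteq> {..<m*k}"
    using assms(1) by (auto simp: survivors_def)
  have "ennreal (card D) = (\<Sum>i\<in>D. ennreal k * ennreal (sz (?I!i)))"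
    using D assms(5)
    by (simp add: adversary_instance_nth subset_eq ennreal_of_nat_eq_real_of_nat flip: ennreal_mult)
  also have "\<dots> \<le> (\<Sum>i\<in>D. ennreal k * (ennreal (sz (?I!i)) * migrations ?I x i))"
  proof (intro sum_mono mult_left_mono)
    fix i
    assume "i \<in> D"
    then have "1 \<le> migrations ?I x i"
      using assms by (intro one_le_migrations_adversary_instance[where t = t]) auto
    then show "ennreal (sz (?I!i)) \<le> ennreal (sz (?I!i)) * migrations ?I x i"
      using mult_left_mono[of 1 "migrations ?I x i" "ennreal (sz (?I!i))"] by simp
  qed simp
  also have "\<dots> \<le> ennreal k * migrated_size ?I x"
    unfolding migrated_size_def sum_distrib_left[symmetric] using D
    by (intro mult_left_mono sum_mono2) auto
  finally show ?thesis .
qed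

(* A survivor still sits in its initial bin unless it has migrated. *)
lemma card_initial_bins_of_survivors_le:
  assumes "k \<ge> 1" "\<mu> \<ge> 1" "1 \<le> t" "t < \<mu>" "\<And>i. i < m*k \<Longrightarrow> x 0 i = L i"
  shows "ennreal (card (L ` survivors k m f))
     \<le> ennreal (nbins (adversary_instance k m \<mu> f) x t)
       + ennreal k * migrated_size (adversary_instance k m \<mu> f) x"
proof -
  let ?S = "survivors k m f"
  let ?D = "{i\<in>?S. x t i \<noteq> L i}"
  have "finite ?S"
    by (rule finite_subset[of _ "{..<m*k}"]) (auto simp: survivors_def)
  then have "card (L ` ?S) \<le> nbins (adversary_instance k m \<mu> f) x t + card ?D"
    using card_image_le_card_image_add_card_differ[of ?S L "x t"] assms(2-4)
    by (simp add: nbins_def present_adversary_instance)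
  then have "ennreal (card (L ` ?S)) \<le> ennreal (nbins (adversary_instance k m \<mu> f) x t) + ennreal (card ?D)"
    by (simp flip: ennreal_plus)
  also have "ennreal (card ?D) \<le> ennreal k * migrated_size (adversary_instance k m \<mu> f) x"
    using assms by (intro card_le_migrated_size_adversary_instance[where t = t]) (auto simp: survivors_def)
  finally show ?thesis
    by (simp add: add_left_mono)
qed

lemma cost_adversary_instance_ge:
  assumes feasible: "feasible (adversary_instance k m \<mu> f) x"
    and measurable: "(\<lambda>t. real (nbins (adversary_instance k m \<mu> f) x t)) \<in> borel_measurable borel"
    and "k \<ge> 1" "\<mu> \<ge> 1" "\<And>i. i < m*k \<Longrightarrow> x 0 i = L i"
  shows "ennreal (real m + (\<mu> - 1) * real (card (L ` survivors k m f)))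
     \<le> cost (adversary_instance k m \<mu> f) x
       + ennreal ((\<mu> - 1) * real k) * migrated_size (adversary_instance k m \<mu> f) x"
proof -
  let ?I = "adversary_instance k m \<mu> f"
  define N where "N t = ennreal (nbins ?I x t)" for t
  define C where "C = ennreal k * migrated_size ?I x"
  define c where "c = ennreal (card (L ` survivors k m f))"
  have "ennreal m * indicator {0..<1} t + c * indicator {1..<\<mu>} t \<le> N t + C * indicator {1..<\<mu>} t"
    for t
  proof (cases "t \<in> {0..<1}")
    case True
    then show ?thesis
      using nbins_adversary_instance_phase1[OF feasible assms(3,4), of t] by (simp add: N_def)
  next
    case False
    then show ?thesis
      using card_initial_bins_of_survivors_le[of k \<mu> t m x L f] assms(3-5)
      by (cases "t \<in> {1..<\<mu>}") (auto simp: N_def C_def c_def)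
  qed
  then have "(\<integral>\<^sup>+ t. ennreal m * indicator {0..<1} t + c * indicator {1..<\<mu>} t \<partial>lborel)
      \<le> (\<integral>\<^sup>+ t. N t + C * indicator {1..<\<mu>} t \<partial>lborel)"
    by (rule nn_integral_mono)
  also have "\<dots> = cost ?I x + C * ennreal (\<mu> - 1)"
    using measurable assms(4)
    by (simp add: nn_integral_add nn_integral_cmult_indicator cost_def N_def)
  finally have "ennreal m + c * ennreal (\<mu> - 1) \<le> cost ?I x + C * ennreal (\<mu> - 1)"
    by (simp add: nn_integral_two_phases[OF assms(4)])
  then show ?thesis
    using assms(4)
    by (simp add: c_def C_def ennreal_mult' ennreal_of_nat_eq_real_of_nat mult_ac)
qed

lemma card_choices_missing_label:
  "card {f\<in>survivor_choices m k. b \<notin> L ` survivors k m f}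
     = (\<Prod>x<m. k - card {y. y < k \<and> L (x*k + y) = b})"
proof -
  have "{f\<in>survivor_choices m k. b \<notin> L ` survivors k m f}
      = (\<Pi>\<^sub>E x\<in>{..<m}. {..<k} - {y. y < k \<and> L (x*k + y) = b})"
  proof (intro equalityI subsetI)
    fix f
    assume "f \<in> {f\<in>survivor_choices m k. b \<notin> L ` survivors k m f}"
    then show "f \<in> (\<Pi>\<^sub>E x\<in>{..<m}. {..<k} - {y. y < k \<and> L (x*k + y) = b})"
      using survivors_eq_image[of f m k] by (auto simp: survivor_choices_def PiE_iff)
  next
    fix f
    assume f: "f \<in> (\<Pi>\<^sub>E x\<in>{..<m}. {..<k} - {y. y < k \<and> L (x*k + y) = b})"
    then have "f \<in> survivor_choices m k"
      by (auto simp: survivor_choices_def PiE_iff)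
    then show "f \<in> {f\<in>survivor_choices m k. b \<notin> L ` survivors k m f}"
      using f survivors_eq_image[of f m k] by (auto simp: PiE_iff)
  qed
  then show ?thesis
    by (simp add: card_PiE card_Diff_subset subset_eq)
qed

lemma card_choices_hitting_label_ge:
  assumes "k \<ge> 1" "card {i. i < m*k \<and> L i = b} \<le> k"
  shows "real (k ^ m) * real (card {i. i < m*k \<and> L i = b}) / (2 * real k)
     \<le> real (card {f\<in>survivor_choices m k. b \<in> L ` survivors k m f})"
proof -
  let ?F = "survivor_choices m k" and ?hit = "\<lambda>f. b \<in> L ` survivors k m f"
  define c where "c x = card {y. y < k \<and> L (x*k + y) = b}" for x
  define p where "p = (\<Prod>x<m. 1 - real (c x) / real k)"
  have c_le: "c x \<le> k" for x
    unfolding c_def by (rule order_trans[OF card_mono[of "{..<k}"]]) auto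
  have "real (card {f\<in>?F. \<not> ?hit f}) = (\<Prod>x<m. real k - real (c x))"
    by (simp add: card_choices_missing_label c_def[symmetric] of_nat_diff[OF c_le])
  also have "\<dots> = real k ^ m * p"
  proof -
    have "real k - real (c x) = real k * (1 - real (c x) / real k)" for x
      using assms(1) by (simp add: field_simps)
    then show ?thesis
      by (simp add: p_def prod.distrib)
  qed
  finally have miss: "real (card {f\<in>?F. \<not> ?hit f}) = real k ^ m * p" .
  have sum_c: "(\<Sum>x<m. real (c x) / real k) = real (card {i. i < m*k \<and> L i = b}) / real k"
    unfolding card_less_mult_eq_sum[of m k "\<lambda>i. L i = b"] by (simp add: c_def sum_divide_distrib)
  have "p \<le> 1 - (\<Sum>x<m. real (c x) / real k) / 2"
    unfolding p_def using assms c_le by (intro prod_one_minus_le) (auto simp: sum_c)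
  moreover have "real (card {f\<in>?F. ?hit f}) = real (card ?F) - real (card {f\<in>?F. \<not> ?hit f})"
  proof -
    have "{f\<in>?F. ?hit f} = ?F - {f\<in>?F. \<not> ?hit f}"
      by blast
    then show ?thesis
      using finite_survivor_choices by (simp add: card_Diff_subset card_mono of_nat_diff)
  qed
  ultimately have "real k ^ m * ((\<Sum>x<m. real (c x) / real k) / 2)
      \<le> real (card {f\<in>?F. ?hit f})"
    using miss mult_left_mono[of "(\<Sum>x<m. real (c x) / real k) / 2" "1 - p" "real k ^ m"]
    by (simp add: card_survivor_choices right_diff_distrib)
  then show ?thesis
    by (simp add: sum_c)
qed

lemma sum_card_survivor_labels_ge:
  assumes "k \<ge> 1" "\<And>b. card {i. i < m*k \<and> L i = b} \<le> k"
  shows "real (k ^ m) * real m / 2 \<le> (\<Sum>f\<in>survivor_choices m k. real (card (L ` survivors k m f)))"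
proof -
  let ?F = "survivor_choices m k" and ?B = "L ` {..<m*k}"
  have labels: "real (card (L ` survivors k m f)) = (\<Sum>b\<in>?B. of_bool (b \<in> L ` survivors k m f))" for f
  proof -
    have "?B \<inter> {b. b \<in> L ` survivors k m f} = L ` survivors k m f"
      by (auto simp: survivors_def)
    then show ?thesis
      by (simp add: sum_of_bool_eq)
  qed
  have hits: "(\<Sum>f\<in>?F. of_bool (b \<in> L ` survivors k m f)) = real (card {f\<in>?F. b \<in> L ` survivors k m f})" for b
    using finite_survivor_choices by (simp add: sum_of_bool_eq Int_def)
  have "(\<Sum>b\<in>?B. card {i. i < m*k \<and> L i = b}) = m * k"
    using sum.group[of "{..<m*k}" ?B L "\<lambda>_. 1::nat"] by simp
  then have "real (k ^ m) * real m / 2 = (\<Sum>b\<in>?B. real (k ^ m) * real (card {i. i < m*k \<and> L i = b}) / (2 * real k))"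
    using assms(1) by (simp add: sum_divide_distrib[symmetric] sum_distrib_left[symmetric] flip: of_nat_sum)
  also have "\<dots> \<le> (\<Sum>b\<in>?B. real (card {f\<in>?F. b \<in> L ` survivors k m f}))"
    using assms by (intro sum_mono card_choices_hitting_label_ge)
  also have "\<dots> = (\<Sum>f\<in>?F. real (card (L ` survivors k m f)))"
    unfolding labels hits[symmetric] by (rule sum.swap)
  finally show ?thesis .
qed

lemma online_nc_adversary_instance_same_start:
  assumes "online_nc B" "k \<ge> 1" "\<mu> \<ge> 1" "i < m*k"
  shows "B (adversary_instance k m \<mu> f) 0 i = B (adversary_instance k m \<mu> g) 0 i"
proof -
  have "view (adversary_instance k m \<mu> f) 0 = view (adversary_instance k m \<mu> g) 0"
    "i < length (view (adversary_instance k m \<mu> f) 0)"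
    using assms(3,4) by (simp_all add: view_adversary_instance_0)
  then show ?thesis
    using assms(1-3) valid_adversary_instance unfolding online_nc_def by blast
qed

lemma sum_cost_adversary_instances_ge:
  assumes "online_nc B"
    and feasible: "\<And>I. valid_instance I \<Longrightarrow> feasible I (B I)"
    and measurable: "\<And>I. valid_instance I \<Longrightarrow> (\<lambda>t. real (nbins I (B I) t)) \<in> borel_measurable borel"
    and "k \<ge> 1" "\<mu> \<ge> 1"
  shows "of_nat (card (survivor_choices m k)) * ennreal (real m * (1 + (\<mu> - 1) / 2))
    \<le> (\<Sum>f\<in>survivor_choices m k. cost (adversary_instance k m \<mu> f) (B (adversary_instance k m \<mu> f))
         + ennreal ((\<mu> - 1) * real k)
           * migrated_size (adversary_instance k m \<mu> f) (B (adversary_instance k m \<mu> f)))"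
proof -
  let ?F = "survivor_choices m k" and ?I = "adversary_instance k m \<mu>"
  define L where "L = B (?I (\<lambda>_. 0)) 0"
  have valid: "valid_instance (?I f)" for f
    using assms(4,5) by (rule valid_adversary_instance)
  have same_start: "B (?I f) 0 i = L i" if "i < m*k" for f i
    unfolding L_def using assms(1,4,5) that by (rule online_nc_adversary_instance_same_start)
  have "card {i. i < m*k \<and> L i = b} \<le> k" for b
    unfolding L_def using feasible[OF valid] assms(4,5)
    by (intro card_bin_adversary_instance_le) auto
  with assms(4) have "real (k ^ m) * real m / 2 \<le> (\<Sum>f\<in>?F. real (card (L ` survivors k m f)))"
    by (rule sum_card_survivor_labels_ge)
  then have "(\<mu> - 1) * (real (k ^ m) * real m / 2)
      \<le> (\<mu> - 1) * (\<Sum>f\<in>?F. real (card (L ` survivors k m f)))"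
    using assms(5) by (intro mult_left_mono) auto
  moreover have "real (card ?F) * (real m * (1 + (\<mu> - 1) / 2))
      = real (card ?F) * real m + (\<mu> - 1) * (real (k ^ m) * real m / 2)"
    by (simp add: card_survivor_choices field_simps)
  ultimately have "real (card ?F) * (real m * (1 + (\<mu> - 1) / 2))
      \<le> (\<Sum>f\<in>?F. real m + (\<mu> - 1) * real (card (L ` survivors k m f)))"
    by (simp add: sum.distrib sum_distrib_left)
  then have "ennreal (real (card ?F) * (real m * (1 + (\<mu> - 1) / 2)))
      \<le> ennreal (\<Sum>f\<in>?F. real m + (\<mu> - 1) * real (card (L ` survivors k m f)))"
    by (rule ennreal_leI)
  then have "of_nat (card ?F) * ennreal (real m * (1 + (\<mu> - 1) / 2))
      \<le> (\<Sum>f\<in>?F. ennreal (real m + (\<mu> - 1) * real (card (L ` survivors k m f))))"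
    using assms(5)
    by (simp only: ennreal_mult'[OF of_nat_0_le_iff] ennreal_of_nat_eq_real_of_nat sum_ennreal
        add_nonneg_nonneg mult_nonneg_nonneg of_nat_0_le_iff diff_ge_0_iff_ge)
  also have "\<dots> \<le> (\<Sum>f\<in>?F. cost (?I f) (B (?I f)) + ennreal ((\<mu> - 1) * real k) * migrated_size (?I f) (B (?I f)))"
    using feasible[OF valid] measurable[OF valid] assms(4,5) same_start
    by (intro sum_mono cost_adversary_instance_ge) auto
  finally show ?thesis .
qed

lemma exists_costly_adversary_instance:
  assumes "randomized_algorithm M A" "k \<ge> 1" "\<mu> \<ge> 1"
  obtains f where "f \<in> survivor_choices m k"
    and "ennreal (real m * (1 + (\<mu> - 1) / 2))
      \<le> exp_cost M A (adversary_instance k m \<mu> f)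
        + ennreal ((\<mu> - 1) * real k) * exp_migrated M A (adversary_instance k m \<mu> f)"
proof -
  let ?F = "survivor_choices m k" and ?I = "adversary_instance k m \<mu>" and ?c = "ennreal ((\<mu> - 1) * real k)"
  define G where "G f \<omega> = cost (?I f) (A \<omega> (?I f)) + ?c * migrated_size (?I f) (A \<omega> (?I f))" for f \<omega>
  have valid: "valid_instance (?I f)" for f
    using assms(2,3) by (rule valid_adversary_instance)
  have measurable: "(\<lambda>\<omega>. cost (?I f) (A \<omega> (?I f))) \<in> borel_measurable M"
      "(\<lambda>\<omega>. migrated_size (?I f) (A \<omega> (?I f))) \<in> borel_measurable M" for f
    using assms(1) valid[of f] by (auto simp: randomized_algorithm_def)
  have "prob_space M"
    using assms(1) by (simp add: randomized_algorithm_def)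
  have "of_nat (card ?F) * ennreal (real m * (1 + (\<mu> - 1) / 2))
      = (\<integral>\<^sup>+ \<omega>. of_nat (card ?F) * ennreal (real m * (1 + (\<mu> - 1) / 2)) \<partial>M)"
    using prob_space.emeasure_space_1[OF \<open>prob_space M\<close>] by simp
  also have "\<dots> \<le> (\<integral>\<^sup>+ \<omega>. (\<Sum>f\<in>?F. G f \<omega>) \<partial>M)"
    using assms(1) assms(2,3) unfolding G_def randomized_algorithm_def
    by (intro nn_integral_mono sum_cost_adversary_instances_ge) auto
  also have "\<dots> = (\<Sum>f\<in>?F. \<integral>\<^sup>+ \<omega>. G f \<omega> \<partial>M)"
    using measurable unfolding G_def by (intro nn_integral_sum) auto
  also have "\<dots> = (\<Sum>f\<in>?F. exp_cost M A (?I f) + ?c * exp_migrated M A (?I f))"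
    using measurable unfolding G_def exp_cost_def exp_migrated_def
    by (simp add: nn_integral_add nn_integral_cmult)
  finally have "\<exists>f\<in>?F. ennreal (real m * (1 + (\<mu> - 1) / 2))
      \<le> exp_cost M A (?I f) + ?c * exp_migrated M A (?I f)"
    using finite_survivor_choices card_survivor_choices[of m k] assms(2)
    by (intro ex_ge_of_card_mult_le_sum) (auto simp: card_eq_0_iff)
  then show ?thesis
    using that by blast
qed

lemma exists_adversary_instance_ratio_gt:
  assumes "randomized_algorithm M A" "\<mu> \<ge> 1" "0 \<le> \<beta>" "\<beta> < \<mu> / 2"
    and "k \<ge> 1" "4 * \<beta> * (\<mu> - 1) \<le> real k" "m = k * r" "m > 0"
    and "0 \<le> \<delta>" "(\<mu> - 1) * real k * \<delta> \<le> 1 / 4"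
    and migration: "\<And>f. exp_migrated M A (adversary_instance k m \<mu> f) \<le> ennreal (\<delta> * real m)"
  shows "\<exists>f\<in>survivor_choices m k.
    ennreal \<beta> * OPT (adversary_instance k m \<mu> f) < exp_cost M A (adversary_instance k m \<mu> f)"
proof -
  let ?I = "adversary_instance k m \<mu>"
  obtain f where "f \<in> survivor_choices m k"
    and lower: "ennreal (real m * (1 + (\<mu> - 1) / 2))
      \<le> exp_cost M A (?I f) + ennreal ((\<mu> - 1) * real k) * exp_migrated M A (?I f)"
    using exists_costly_adversary_instance[OF assms(1,5,2)] by blast
  have "ennreal \<beta> * OPT (?I f) < exp_cost M A (?I f)"
  proof (rule ccontr)
    assume "\<not> ?thesis"
    then have cost: "exp_cost M A (?I f) \<le> ennreal \<beta> * ennreal (real m + (\<mu> - 1) * real r)"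
      using OPT_adversary_instance_le[OF assms(2,5,7), of f]
      by (meson not_less order_trans mult_left_mono zero_le)
    have nonneg: "0 \<le> real m + (\<mu> - 1) * real r" "0 \<le> (\<mu> - 1) * real k" "0 \<le> \<delta> * real m"
      using assms(2,9) by auto
    have "ennreal (real m * (1 + (\<mu> - 1) / 2))
        \<le> ennreal \<beta> * ennreal (real m + (\<mu> - 1) * real r) + ennreal ((\<mu> - 1) * real k) * ennreal (\<delta> * real m)"
      using order_trans[OF lower add_mono[OF cost mult_left_mono[OF migration[of f]]]] by simp
    also have "\<dots> = ennreal (\<beta> * (real m + (\<mu> - 1) * real r) + (\<mu> - 1) * real k * (\<delta> * real m))"
      using assms(3) nonneg
      by (simp only: ennreal_mult[symmetric] ennreal_plus[symmetric] mult_nonneg_nonneg)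
    finally have "real m * (1 + (\<mu> - 1) / 2)
        \<le> \<beta> * (real m + (\<mu> - 1) * real r) + (\<mu> - 1) * real k * (\<delta> * real m)"
      using assms(3) nonneg by (subst (asm) ennreal_le_iff) auto
    moreover have "\<beta> * (real m + (\<mu> - 1) * real r) = real m * \<beta> + \<beta> * (\<mu> - 1) * real r"
      by (simp add: algebra_simps)
    moreover have "\<beta> * (\<mu> - 1) * real r \<le> real m / 4"
      using mult_right_mono[OF assms(6), of "real r"] assms(7) by simp
    moreover have "(\<mu> - 1) * real k * (\<delta> * real m) \<le> real m / 4"
      using mult_right_mono[OF assms(10), of "real m"] by simp
    moreover have "real m * (1 + (\<mu> - 1) / 2) = real m * (\<mu> / 2) + real m / 2"
      by (simp add: field_simps)
    ultimately have "real m * (\<mu> / 2) \<le> real m * \<beta>"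
      by linarith
    then show False
      using assms(4,8) by simp
  qed
  with \<open>f \<in> survivor_choices m k\<close> show ?thesis
    by blast
qed

lemma exists_adversary_instance_ratio_gt_of_smallo:
  fixes g :: "real \<Rightarrow> real"
  assumes "randomized_algorithm M A" "\<mu> \<ge> 1" "0 \<le> \<beta>" "\<beta> < \<mu> / 2" "g \<in> o(\<lambda>x. x)"
    and g_bound: "\<And>I. valid_instance I \<Longrightarrow> exp_migrated M A I \<le> ennreal (g (total_size I))"
  obtains k m f where "k \<ge> 2" "m > 0" "f \<in> survivor_choices m k"
    and "ennreal \<beta> * OPT (adversary_instance k m \<mu> f) < exp_cost M A (adversary_instance k m \<mu> f)"
proof -
  define k where "k = max 2 (nat \<lceil>4 * \<beta> * (\<mu> - 1)\<rceil>)"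
  have "k \<ge> 2" "4 * \<beta> * (\<mu> - 1) \<le> real k"
    unfolding k_def by linarith+
  define \<delta> where "\<delta> = 1 / (4 * (\<mu> - 1) * real k + 1)"
  have "0 < 4 * (\<mu> - 1) * real k + 1"
    using assms(2) by (intro add_nonneg_pos) simp_all
  then have "\<delta> > 0" "(\<mu> - 1) * real k * \<delta> \<le> 1 / 4"
    by (simp_all add: \<delta>_def field_simps)
  then obtain N where N: "\<And>n. n \<ge> N \<Longrightarrow> g (real n) \<le> \<delta> * real n"
    using smallo_id_eventually_le[OF assms(5)] unfolding eventually_sequentially by blast
  define m where "m = k * Suc N"
  have "m > 0" "N \<le> m"
    using \<open>k \<ge> 2\<close> mult_le_mono1[of 1 k "Suc N"] by (auto simp: m_def)
  have "exp_migrated M A (adversary_instance k m \<mu> f) \<le> ennreal (\<delta> * real m)" for f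
  proof -
    have "valid_instance (adversary_instance k m \<mu> f)"
      using \<open>k \<ge> 2\<close> assms(2) by (intro valid_adversary_instance) auto
    then have "exp_migrated M A (adversary_instance k m \<mu> f)
        \<le> ennreal (g (total_size (adversary_instance k m \<mu> f)))"
      by (rule g_bound)
    also have "total_size (adversary_instance k m \<mu> f) = real m"
      using \<open>k \<ge> 2\<close> by (intro total_size_adversary_instance) simp
    also have "ennreal (g (real m)) \<le> ennreal (\<delta> * real m)"
      using N[OF \<open>N \<le> m\<close>] by (rule ennreal_leI)
    finally show ?thesis .
  qed
  then show ?thesis
    using exists_adversary_instance_ratio_gt[OF assms(1-4) _ _ m_def \<open>m > 0\<close> _ \<open>(\<mu> - 1) * real k * \<delta> \<le> 1 / 4\<close>]
      that \<open>k \<ge> 2\<close> \<open>4 * \<beta> * (\<mu> - 1) \<le> real k\<close> \<open>m > 0\<close> \<open>\<delta> > 0\<close> by fastforce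
qed

theorem theorem21:
  fixes M :: "'r measure" and A :: "'r \<Rightarrow> item list \<Rightarrow> schedule" and \<mu> :: real
  assumes "randomized_algorithm M A"
    and "\<mu> \<ge> 1"
    and "\<exists>g :: real \<Rightarrow> real. g \<in> o(\<lambda>x. x) \<and>
           (\<forall>I. valid_instance I \<longrightarrow> exp_migrated M A I \<le> ennreal (g (total_size I)))"
  shows "\<forall>\<beta> < \<mu> / 6. \<exists>I. valid_instance I \<and> I \<noteq> [] \<and> duration_ratio I = \<mu> \<and>
           ennreal \<beta> * OPT I < exp_cost M A I"
proof (intro allI impI)
  fix \<beta> :: real
  assume "\<beta> < \<mu> / 6"
  then have "0 \<le> max \<beta> 0" "max \<beta> 0 < \<mu> / 2"
    using assms(2) by auto
  then obtain k m f where "k \<ge> 2" "m > 0" "f \<in> survivor_choices m k"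
    and ratio: "ennreal (max \<beta> 0) * OPT (adversary_instance k m \<mu> f)
      < exp_cost M A (adversary_instance k m \<mu> f)"
    using exists_adversary_instance_ratio_gt_of_smallo[OF assms(1,2)] assms(3) by metis
  have "ennreal \<beta> = ennreal (max \<beta> 0)"
    by (cases "\<beta> \<le> 0") (simp_all add: ennreal_neg max_def)
  moreover have "valid_instance (adversary_instance k m \<mu> f)"
    using \<open>k \<ge> 2\<close> assms(2) by (intro valid_adversary_instance) auto
  moreover have "adversary_instance k m \<mu> f \<noteq> []"
    using \<open>m > 0\<close> \<open>k \<ge> 2\<close> by (simp flip: length_greater_0_conv)
  moreover have "duration_ratio (adversary_instance k m \<mu> f) = \<mu>"
    using \<open>f \<in> survivor_choices m k\<close> \<open>k \<ge> 2\<close> \<open>m > 0\<close> assms(2)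
    by (intro duration_ratio_adversary_instance) (auto simp: survivor_choices_def)
  ultimately show "\<exists>I. valid_instance I \<and> I \<noteq> [] \<and> duration_ratio I = \<mu> \<and> ennreal \<beta> * OPT I < exp_cost M A I"
    using ratio by auto
qed

end
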